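(* Let $v_2$, $v_3$ and $\delta$ satisfy the standing assumptions described in the context. A deformation $y:H\to\mathbb{R}^3$ is a ground state (i.e. a minimizer of $E$ among all maps $H\to\mathbb{R}^3$) if and only if all its cells are optimal, i.e. every cell $(y(x_1),\dots,y(x_6))$ of $y$ is a minimizer of $E_{\rm cell}$ over $(\mathbb{R}^3)^6$.
   Context: Hexagonal lattice: $H=\{sa+tb+rc: s,t\in\mathbb{Z},\ r\in\{0,1\}\}\subset\mathbb{R}^2$ with $a=(3/2,\sqrt3/2)$, $b=(0,\sqrt3)$, $c=(1,0)$. The hexagonal graph connects points of $H$ at distance $1$. A reference cell is a set $\{x_1,\dots,x_6\}\subset H$ forming a simple cycle (a hexagon) in the hexagonal graph, labeled counterclockwise so that $x_1$ is the vertex of the form $na+mb$ ($n,m\in\mathbb{Z}$) with $n+m$ minimal in the cell. For a deformation $y:H\to\mathbb{R}^3$, the corresponding cell is $(y_1,\dots,y_6)$ with $y_i=y(x_i)$; indices are taken modulo $6$. Barycenters of reference cells are the points $(1/2,\sqrt3/2)+sa+tb$, $(s,t)\in\mathbb{Z}^2$, and the cell is indexed by $(s,t)$. Cell energy: $$E_{\rm cell}(y_1,\dots,y_6)=\tfrac12\sum_{i=1}^6 v_2(|y_i-y_{i-1}|)+\sum_{i=1}^6 v_2(|y_i-y_{i-2}|)+\sum_{i=1}^6 v_3(\theta_i),$$ where $\theta_i\in[0,\pi]$ is the angle at $y_i$ between the segments $\{y_i,y_{i+1}\}$ and $\{y_i,y_{i-1}\}$. Energy of a deformation: $E(y)=\sup_{m\in\mathbb{N}}\frac{1}{\#(T\cap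 B_m)}\sum_{(s,t)\in T\cap B_m}E_{\rm cell}(s,t)$, where $T=(1/2,\sqrt3/2)+\{sa+tb:s,t\in\mathbb{Z}\}$, $B_m$ is the ball of radius $m$ centered at $0$, and $E_{\rm cell}(s,t)$ is the cell energy of the cell with barycenter $(1/2,\sqrt3/2)+sa+tb$. An optimal cell is a minimizer of $E_{\rm cell}$ on $(\mathbb{R}^3)^6$. Standing assumptions: $v_2:(0,\infty)\to[-1,\infty)$ is continuous, attains its minimum value $-1$ only at $1$, is decreasing on $(0,1)$ and increasing on $[1,\infty)$, and is differentiable on $(5/4,\sqrt3]$ with $v_2'>0$ there; $v_3:[0,\pi]\to[0,\infty)$ is continuous, attains its minimum value $0$ only at $2\pi/3$, and is differentiable at $2\pi/3$. Moreover there is $0<\delta\le 0.2$ with: (i) $v_2(1-\delta)>11+12v_2(\sqrt3)$; (ii) $v_2(1+\delta)>-1+12v_2(\sqrt3)-12v_2(\sqrt3(1-\delta)^2)$; (iii) $v_3(\theta)>6+6v_2(\sqrt3)$ whenever $|\theta-2\pi/3|\ge\delta$; (iv) the map $(\ell_1,\ell_2,\theta)\mapsto \frac14 v_2(\ell_1)+\frac14 v_2(\ell_2)+v_2\big((\ell_1^2+\ell_2^2-2\ell_1\ell_2\cos\theta)^{1/2}\big)+v_3(\theta)$ is strictly convex on $\{|\ell_1-1|<\delta,\ |\ell_2-1|<\delta,\ |\theta-2\pi/3|<\delta\}$. *)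

theory Defs
  imports "HOL-Analysis.Analysis" "HOL-Library.Numeral_Type"
begin

definition la :: "real^2" where "la = vector [3/2, sqrt 3 / 2]"
definition lb :: "real^2" where "lb = vector [0, sqrt 3]"
definition lc :: "real^2" where "lc = vector [1, 0]"

definition hex_lattice :: "(real^2) set" where
  "hex_lattice = {of_int s *\<^sub>R la + of_int t *\<^sub>R lb + r *\<^sub>R lc | s t r. r \<in> {0, 1}}"

definition bary :: "int \<Rightarrow> int \<Rightarrow> real^2" where
  "bary s t = vector [1/2, sqrt 3 / 2] + of_int s *\<^sub>R la + of_int t *\<^sub>R lb"

text \<open>Vertices x_1,...,x_6 of the reference cell with barycenter bary s t, labelled
  counterclockwise starting from the vertex of the form n a + m b with n+m minimal.
  Indices live in the numeral type 6 (arithmetic modulo 6; the element 6 equals 0).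
  Concretely x_k = bary s t + (cos(4pi/3 + (k-1)pi/3), sin(4pi/3 + (k-1)pi/3)).\<close>
definition cell_vertex :: "int \<Rightarrow> int \<Rightarrow> 6 \<Rightarrow> real^2" where
  "cell_vertex s t i = of_int s *\<^sub>R la + of_int t *\<^sub>R lb +
     (if i = 1 then 0
      else if i = 2 then lc
      else if i = 3 then la
      else if i = 4 then lb + lc
      else if i = 5 then lb
      else lb - la + lc)"

definition def_cell :: "(real^2 \<Rightarrow> real^3) \<Rightarrow> int \<Rightarrow> int \<Rightarrow> real^3^6" where
  "def_cell y s t = (\<chi> i. y (cell_vertex s t i))"

definition angle_at :: "real^3 \<Rightarrow> real^3 \<Rightarrow> real^3 \<Rightarrow> real" where
  "angle_at p q r = arccos (((q - p) \<bullet> (r - p)) / (norm (q - p) * norm (r - p)))"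

text \<open>Cell energy. Since v2 is only defined on (0,infinity), configurations in which some
  first- or second-neighbour distance vanishes are assigned energy +infinity.\<close>
definition E_cell :: "(real \<Rightarrow> real) \<Rightarrow> (real \<Rightarrow> real) \<Rightarrow> real^3^6 \<Rightarrow> ereal" where
  "E_cell v2 v3 z =
     (if (\<forall>i. z$i \<noteq> z$(i - 1) \<and> z$i \<noteq> z$(i - 2))
      then ereal ((1/2) * (\<Sum>i\<in>UNIV. v2 (norm (z$i - z$(i - 1))))
                 + (\<Sum>i\<in>UNIV. v2 (norm (z$i - z$(i - 2))))
                 + (\<Sum>i\<in>UNIV. v3 (angle_at (z$i) (z$(i + 1)) (z$(i - 1)))))
      else \<infinity>)"

definition cells_in_ball :: "nat \<Rightarrow> (int \<times> int) set" where
  "cells_in_ball m = {(s, t). bary s t \<in> cball 0 (real m)}"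

definition E_def :: "(real \<Rightarrow> real) \<Rightarrow> (real \<Rightarrow> real) \<Rightarrow> (real^2 \<Rightarrow> real^3) \<Rightarrow> ereal" where
  "E_def v2 v3 y = (SUP m\<in>{1..}. (\<Sum>(s, t)\<in>cells_in_ball m. E_cell v2 v3 (def_cell y s t))
                                    / ereal (real (card (cells_in_ball m))))"

definition optimal_cell :: "(real \<Rightarrow> real) \<Rightarrow> (real \<Rightarrow> real) \<Rightarrow> real^3^6 \<Rightarrow> bool" where
  "optimal_cell v2 v3 z \<longleftrightarrow> (\<forall>w. E_cell v2 v3 z \<le> E_cell v2 v3 w)"

definition ground_state :: "(real \<Rightarrow> real) \<Rightarrow> (real \<Rightarrow> real) \<Rightarrow> (real^2 \<Rightarrow> real^3) \<Rightarrow> bool" where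
  "ground_state v2 v3 y \<longleftrightarrow> (\<forall>y'. E_def v2 v3 y \<le> E_def v2 v3 y')"

definition strict_convex_on :: "'a::real_vector set \<Rightarrow> ('a \<Rightarrow> real) \<Rightarrow> bool" where
  "strict_convex_on S f \<longleftrightarrow> convex S \<and>
     (\<forall>x\<in>S. \<forall>y\<in>S. \<forall>u. x \<noteq> y \<and> 0 < u \<and> u < 1 \<longrightarrow>
        f ((1 - u) *\<^sub>R x + u *\<^sub>R y) < (1 - u) * f x + u * f y)"

definition angle_fun :: "(real \<Rightarrow> real) \<Rightarrow> (real \<Rightarrow> real) \<Rightarrow> real \<times> real \<times> real \<Rightarrow> real" where
  "angle_fun v2 v3 = (\<lambda>(l1, l2, \<theta>). (1/4) * v2 l1 + (1/4) * v2 l2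
       + v2 (sqrt (l1\<^sup>2 + l2\<^sup>2 - 2 * l1 * l2 * cos \<theta>)) + v3 \<theta>)"

definition standing_assumptions :: "(real \<Rightarrow> real) \<Rightarrow> (real \<Rightarrow> real) \<Rightarrow> real \<Rightarrow> bool" where
  "standing_assumptions v2 v3 \<delta> \<longleftrightarrow>
     continuous_on {0<..} v2 \<and>
     v2 1 = -1 \<and> (\<forall>r>0. r \<noteq> 1 \<longrightarrow> v2 r > -1) \<and>
     (\<forall>r s. 0 < r \<and> r \<le> s \<and> s < 1 \<longrightarrow> v2 s \<le> v2 r) \<and>
     (\<forall>r s. 1 \<le> r \<and> r \<le> s \<longrightarrow> v2 r \<le> v2 s) \<and>
     (\<forall>r\<in>{5/4<..sqrt 3}. \<exists>d>0. (v2 has_real_derivative d) (at r within {5/4<..sqrt 3})) \<and>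
     continuous_on {0..pi} v3 \<and>
     v3 (2*pi/3) = 0 \<and> (\<forall>\<theta>\<in>{0..pi}. \<theta> \<noteq> 2*pi/3 \<longrightarrow> v3 \<theta> > 0) \<and>
     v3 differentiable (at (2*pi/3)) \<and>
     0 < \<delta> \<and> \<delta> \<le> 0.2 \<and>
     v2 (1 - \<delta>) > 11 + 12 * v2 (sqrt 3) \<and>
     v2 (1 + \<delta>) > -1 + 12 * v2 (sqrt 3) - 12 * v2 (sqrt 3 * (1 - \<delta>)\<^sup>2) \<and>
     (\<forall>\<theta>\<in>{0..pi}. \<bar>\<theta> - 2*pi/3\<bar> \<ge> \<delta> \<longrightarrow> v3 \<theta> > 6 + 6 * v2 (sqrt 3)) \<and>
     strict_convex_on {(l1, l2, \<theta>). \<bar>l1 - 1\<bar> < \<delta> \<and> \<bar>l2 - 1\<bar> < \<delta> \<and> \<bar>\<theta> - 2*pi/3\<bar> < \<delta>}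
       (angle_fun v2 v3)"

end

theory Submission
  imports Defs
begin

text \<open>Writing the energy of a cell as a sum over its six corners of the function
  angle_fun of the two adjacent bond lengths and the enclosed angle, every cell has energy
  at least 6 angle_fun(l, l, \<theta>) for some l > 0 and 0 < \<theta> \<le> 2 pi/3: conditions (i)--(iii)
  push every cell far from the reference hexagon above the energy of the reference hexagon
  itself, and near it the convexity (iv) lets one replace the six corners by their average
  (Jensen). Conversely each value 6 angle_fun(l, l, \<theta>) is the energy of every cell of a
  ``chair'' deformation: the lattice scaled in the plane with the two sublattices lifted to
  heights h and -h. Hence the infimum of the cell energy is finite and is the energy of a
  deformation, so it is the ground-state energy, and since E averages cell energies over
  balls, E(y) equals it exactly when every cell of y attains it.\<close>

lemma exhaust_6:
  fixes i :: 6
  shows "i = 0 \<or> i = 1 \<or> i = 2 \<or> i = 3 \<or> i = 4 \<or> i = 5"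
proof (induct i)
  case (of_int z)
  then have "z = 0 \<or> z = 1 \<or> z = 2 \<or> z = 3 \<or> z = 4 \<or> z = 5" by fastforce
  then show ?case by auto
qed

lemma sum_UNIV_add_right:
  fixes g :: "'a::{finite, group_add} \<Rightarrow> 'b::comm_monoid_add"
  shows "(\<Sum>i\<in>UNIV. g (i + a)) = (\<Sum>i\<in>UNIV. g i)"
  by (rule sum.reindex_bij_witness[where i="\<lambda>i. i - a" and j="\<lambda>i. i + a"]) auto

lemma add_one_diff_two: "(i::'a::ring_1) + 1 - 2 = i - 1"
  by (simp add: algebra_simps)

lemma cos_ge_one_minus_half_sq: "1 - x\<^sup>2 / 2 \<le> cos (x::real)"
proof -
  have "\<bar>sin (x/2)\<bar> \<le> \<bar>x/2\<bar>" by (rule abs_sin_x_le_abs_x)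
  then have "(sin (x/2))\<^sup>2 \<le> (x/2)\<^sup>2" by (metis abs_le_square_iff)
  then show ?thesis using cos_double_sin[of "x/2"] by (simp add: power_divide)
qed

lemma sqrt_3_gt: "sqrt 3 > (1.7::real)"
  by (rule real_less_rsqrt) (simp add: power2_eq_square)

lemma one_minus_cos_near_120:
  fixes d t :: real
  assumes d: "0 < d" "d \<le> 0.2" and t: "2*pi/3 - d \<le> t" "t \<le> pi"
  shows "3 * (1 - d)\<^sup>2 \<le> 2 * (1 - cos t)"
proof -
  have "cos t \<le> cos (2*pi/3 - d)"
    by (rule cos_monotone_0_pi_le) (use t d pi_gt3 in auto)
  also have "\<dots> = -1/2 * cos d + sqrt 3 / 2 * sin d"
    by (simp add: cos_diff cos_120 sin_120)
  also have "\<dots> \<le> -1/2 * (1 - d\<^sup>2/2) + sqrt 3 / 2 * d"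
  proof (rule add_mono)
    show "-1/2 * cos d \<le> -1/2 * (1 - d\<^sup>2/2)" using cos_ge_one_minus_half_sq[of d] by simp
    show "sqrt 3 / 2 * sin d \<le> sqrt 3 / 2 * d" using sin_x_le_x[of d] d by (intro mult_left_mono) auto
  qed
  finally have "cos t \<le> -1/2 * (1 - d\<^sup>2/2) + sqrt 3 / 2 * d" .
  moreover have "sqrt 3 / 2 * d \<le> 1 * d"
    using real_less_lsqrt[of 2 3] d by (intro mult_right_mono) simp_all
  moreover have "d\<^sup>2 \<le> 0.2 * d" using d by (simp add: power2_eq_square mult_right_mono)
  moreover have "(1 - d)\<^sup>2 = 1 - 2*d + d\<^sup>2" by (simp add: power2_diff)
  ultimately show ?thesis using d by argo
qed

lemma law_of_cosines_lower_bound: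
  fixes a b t d :: real
  assumes d: "0 < d" "d \<le> 0.2" and a: "1 - d \<le> a" and b: "1 - d \<le> b"
    and t: "2*pi/3 - d \<le> t" "t \<le> pi"
  shows "3 * (1 - d)^4 \<le> a\<^sup>2 + b\<^sup>2 - 2*a*b*cos t"
proof -
  have "(1 - d)\<^sup>2 \<le> a * b"
    using a b d by (simp add: power2_eq_square mult_mono)
  then have "(1 - d)\<^sup>2 * (3 * (1 - d)\<^sup>2) \<le> (a * b) * (2 * (1 - cos t))"
    by (rule mult_mono[OF _ one_minus_cos_near_120[OF d t]]) (use a b d in auto)
  moreover have "2*a*b \<le> a\<^sup>2 + b\<^sup>2"
    using sum_squares_ge_zero[of "a - b" 0] by (simp add: power2_eq_square algebra_simps)
  ultimately show ?thesis by (simp add: power2_eq_square power4_eq_xxxx algebra_simps)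
qed

lemma strict_convex_on_imp_convex_on:
  assumes "strict_convex_on S f"
  shows "convex_on S f"
  unfolding convex_on_def
proof (intro conjI ballI allI impI)
  show "convex S" using assms unfolding strict_convex_on_def by blast
next
  fix x y and u v :: real
  assume x: "x \<in> S" and y: "y \<in> S" and uv: "0 \<le> u" "0 \<le> v" "u + v = 1"
  show "f (u *\<^sub>R x + v *\<^sub>R y) \<le> u * f x + v * f y"
  proof (cases "x = y \<or> v = 0 \<or> v = 1")
    case True
    with uv show ?thesis
      by (auto simp: scaleR_left_distrib[symmetric] distrib_right[symmetric])
  next
    case False
    then have "f ((1 - v) *\<^sub>R x + v *\<^sub>R y) < (1 - v) * f x + v * f y"
      using assms x y uv unfolding strict_convex_on_def by auto
    moreover have "1 - v = u" using uv by simp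
    ultimately show ?thesis by simp
  qed
qed

section \<open>Cells as sums of corner terms\<close>

definition third_side :: "real \<Rightarrow> real \<Rightarrow> real \<Rightarrow> real" where
  "third_side a b \<theta> = sqrt (a\<^sup>2 + b\<^sup>2 - 2 * a * b * cos \<theta>)"

lemma angle_fun_eq:
  "angle_fun v2 v3 (a, b, \<theta>) = v2 a / 4 + v2 b / 4 + v2 (third_side a b \<theta>) + v3 \<theta>"
  unfolding angle_fun_def third_side_def by simp

lemma cos_angle_at:
  fixes p q r :: "real^3"
  assumes "q \<noteq> p" "r \<noteq> p"
  shows "cos (angle_at p q r) = ((q - p) \<bullet> (r - p)) / (norm (q - p) * norm (r - p))"
    and "0 \<le> angle_at p q r" "angle_at p q r \<le> pi"
proof -
  define x where "x = ((q - p) \<bullet> (r - p)) / (norm (q - p) * norm (r - p))"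
  have "norm (q - p) * norm (r - p) > 0" using assms by simp
  moreover have "\<bar>(q - p) \<bullet> (r - p)\<bar> \<le> norm (q - p) * norm (r - p)" by (rule Cauchy_Schwarz_ineq2)
  ultimately have "\<bar>x\<bar> \<le> 1" unfolding x_def by (simp add: abs_divide divide_le_eq_1)
  then have "-1 \<le> x" "x \<le> 1" by auto
  then show "cos (angle_at p q r) = x" "0 \<le> angle_at p q r" "angle_at p q r \<le> pi"
    unfolding angle_at_def x_def[symmetric] by (simp_all add: cos_arccos arccos_lbound arccos_ubound)
qed

lemma law_of_cosines_angle_at:
  fixes p q r :: "real^3"
  assumes "q \<noteq> p" "r \<noteq> p"
  shows "(norm (q - r))\<^sup>2 = (norm (q - p))\<^sup>2 + (norm (r - p))\<^sup>2
           - 2 * norm (q - p) * norm (r - p) * cos (angle_at p q r)"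
proof -
  have "norm (q - p) * norm (r - p) > 0" using assms by simp
  then have "2 * norm (q - p) * norm (r - p) * cos (angle_at p q r) = 2 * ((q - p) \<bullet> (r - p))"
    unfolding cos_angle_at(1)[OF assms] by simp
  moreover have "(norm ((q - p) - (r - p)))\<^sup>2 = (norm (q - p))\<^sup>2 + (norm (r - p))\<^sup>2 - 2 * ((q - p) \<bullet> (r - p))"
    by (simp only: power2_norm_eq_inner inner_diff_left inner_diff_right) (simp add: inner_commute)
  ultimately show ?thesis by simp
qed

text \<open>Each first-neighbour bond is shared by two corners, which accounts for the weights 1/4 in
  angle_fun against the weight 1/2 in E_cell; the second-neighbour bond opposite corner i
  is the third side of the triangle spanned by the two bonds at i.\<close>
lemma E_cell_eq_sum_angle_fun:
  fixes z :: "real^3^6"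
  assumes nd: "\<forall>i. z$i \<noteq> z$(i - 1) \<and> z$i \<noteq> z$(i - 2)"
  defines "L \<equiv> \<lambda>i. norm (z$i - z$(i - 1))"
  defines "T \<equiv> \<lambda>i. angle_at (z$i) (z$(i + 1)) (z$(i - 1))"
  shows "E_cell v2 v3 z = ereal (\<Sum>i\<in>UNIV. angle_fun v2 v3 (L (i+1), L i, T i))"
    and "\<And>i. L i > 0" "\<And>i. 0 \<le> T i" "\<And>i. T i \<le> pi"
    and "\<And>i. 0 < third_side (L (i+1)) (L i) (T i)"
proof -
  have n1: "z$(i+1) \<noteq> z$i" for i using nd[rule_format, of "i+1"] by simp
  have n2: "z$(i-1) \<noteq> z$i" for i using nd by metis
  have n3: "z$(i+1) \<noteq> z$(i-1)" for i using nd[rule_format, of "i+1"] by (simp add: add_one_diff_two)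
  have L_succ: "L (i+1) = norm (z$(i+1) - z$i)" for i unfolding L_def by simp
  have L_pred: "L i = norm (z$(i-1) - z$i)" for i unfolding L_def by (simp add: norm_minus_commute)
  have "(norm (z$(i+1) - z$(i-1)))\<^sup>2 = (L (i+1))\<^sup>2 + (L i)\<^sup>2 - 2 * L (i+1) * L i * cos (T i)" for i
    using law_of_cosines_angle_at[OF n1 n2] unfolding T_def by (simp only: L_succ L_pred[of i])
  then have third: "third_side (L (i+1)) (L i) (T i) = norm (z$(i+1) - z$(i-1))" for i
    unfolding third_side_def by (metis norm_ge_zero real_sqrt_abs abs_of_nonneg)
  show "L i > 0" for i unfolding L_def using nd by auto
  show "0 \<le> T i" "T i \<le> pi" for i unfolding T_def by (rule cos_angle_at(2,3)[OF n1 n2])+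
  show "0 < third_side (L (i+1)) (L i) (T i)" for i unfolding third using n3[of i] by simp
  have "(\<Sum>i\<in>UNIV. v2 (norm (z$i - z$(i - 2)))) = (\<Sum>i\<in>UNIV. v2 (norm (z$(i+1) - z$(i - 1))))"
    using sum_UNIV_add_right[of "\<lambda>i. v2 (norm (z$i - z$(i - 2)))" 1] by (simp add: add_one_diff_two)
  moreover have "(\<Sum>i\<in>UNIV. v2 (L (i+1)) / 4) = (\<Sum>i\<in>UNIV. v2 (L i) / 4)"
    by (rule sum_UNIV_add_right)
  moreover have "(\<Sum>i\<in>UNIV. angle_fun v2 v3 (L (i+1), L i, T i)) =
      (\<Sum>i\<in>UNIV. v2 (L (i+1)) / 4) + (\<Sum>i\<in>UNIV. v2 (L i) / 4)
      + (\<Sum>i\<in>UNIV. v2 (norm (z$(i+1) - z$(i - 1)))) + (\<Sum>i\<in>UNIV. v3 (T i))"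
    unfolding angle_fun_eq third by (simp add: sum.distrib)
  ultimately show "E_cell v2 v3 z = ereal (\<Sum>i\<in>UNIV. angle_fun v2 v3 (L (i+1), L i, T i))"
    unfolding E_cell_def using nd by (simp add: L_def T_def sum_divide_distrib[symmetric])
qed

section \<open>A lower bound for the cell energy\<close>

lemma sum_ge_member_plus:
  fixes c :: real and f :: "'a::finite \<Rightarrow> real" and i0 :: 'a
  assumes "\<And>i. c \<le> f i"
  shows "f i0 + (CARD('a) - 1) * c \<le> (\<Sum>i\<in>UNIV. f i)"
proof -
  have "(\<Sum>i\<in>UNIV - {i0}. c) \<le> (\<Sum>i\<in>UNIV - {i0}. f i)" by (rule sum_mono) (rule assms)
  moreover have "(\<Sum>i\<in>UNIV. f i) = f i0 + (\<Sum>i\<in>UNIV - {i0}. f i)" by (simp add: sum.remove)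
  ultimately show ?thesis by (simp add: card_Diff_singleton of_nat_diff)
qed

locale hex_potentials =
  fixes v2 v3 :: "real \<Rightarrow> real" and \<delta> :: real
  assumes standing: "standing_assumptions v2 v3 \<delta>"
begin

lemma v2_ge_minus_one: "0 < r \<Longrightarrow> -1 \<le> v2 r"
  using standing unfolding standing_assumptions_def by (metis order.refl less_le)

lemma v3_nonneg: "0 \<le> t \<Longrightarrow> t \<le> pi \<Longrightarrow> 0 \<le> v3 t"
  using standing unfolding standing_assumptions_def by (metis atLeastAtMost_iff order.refl less_le)

lemma v2_antimono_below_one: "0 < r \<Longrightarrow> r \<le> s \<Longrightarrow> s < 1 \<Longrightarrow> v2 s \<le> v2 r"
  using standing unfolding standing_assumptions_def by blast

lemma v2_mono_above_one: "1 \<le> r \<Longrightarrow> r \<le> s \<Longrightarrow> v2 r \<le> v2 s"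
  using standing unfolding standing_assumptions_def by blast

lemma v2_one: "v2 1 = -1"
  and v3_120: "v3 (2*pi/3) = 0"
  and delta_pos: "0 < \<delta>"
  and delta_le: "\<delta> \<le> 0.2"
  and v2_compressed: "11 + 12 * v2 (sqrt 3) < v2 (1 - \<delta>)"
  and v2_stretched: "-1 + 12 * v2 (sqrt 3) - 12 * v2 (sqrt 3 * (1 - \<delta>)\<^sup>2) < v2 (1 + \<delta>)"
  using standing unfolding standing_assumptions_def by auto

lemma v3_bent: "0 \<le> t \<Longrightarrow> t \<le> pi \<Longrightarrow> \<delta> \<le> \<bar>t - 2*pi/3\<bar> \<Longrightarrow> 6 + 6 * v2 (sqrt 3) < v3 t"
  using standing unfolding standing_assumptions_def by auto

definition near_reference :: "(real \<times> real \<times> real) set" where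
  "near_reference = {(l1, l2, \<theta>). \<bar>l1 - 1\<bar> < \<delta> \<and> \<bar>l2 - 1\<bar> < \<delta> \<and> \<bar>\<theta> - 2*pi/3\<bar> < \<delta>}"

lemma convex_on_near_reference: "convex_on near_reference (angle_fun v2 v3)"
  using standing strict_convex_on_imp_convex_on
  unfolding standing_assumptions_def near_reference_def by blast

lemma reference_energy: "6 * angle_fun v2 v3 (1, 1, 2*pi/3) = -3 + 6 * v2 (sqrt 3)"
  unfolding angle_fun_def by (simp add: cos_120 v2_one v3_120)

definition corner_sum :: "(6 \<Rightarrow> real) \<Rightarrow> (6 \<Rightarrow> real) \<Rightarrow> real" where
  "corner_sum L T = (\<Sum>i\<in>UNIV. angle_fun v2 v3 (L (i+1), L i, T i))"

lemma corner_sum_split: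
  "corner_sum L T = (\<Sum>i\<in>UNIV. v2 (L i)) / 2 + (\<Sum>i\<in>UNIV. v2 (third_side (L (i+1)) (L i) (T i)))
     + (\<Sum>i\<in>UNIV. v3 (T i))"
proof -
  have "(\<Sum>i\<in>UNIV. v2 (L (i+1)) / 4) = (\<Sum>i\<in>UNIV. v2 (L i) / 4)" by (rule sum_UNIV_add_right)
  then show ?thesis
    unfolding corner_sum_def angle_fun_eq by (simp add: sum.distrib sum_divide_distrib[symmetric])
qed

lemma corner_sum_ge_average_corner:
  assumes "\<And>i. (L (i+1), L i, T i) \<in> near_reference"
  shows "6 * angle_fun v2 v3 ((\<Sum>i\<in>UNIV. L i) / 6, (\<Sum>i\<in>UNIV. L i) / 6, (\<Sum>i\<in>UNIV. T i) / 6)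
           \<le> corner_sum L T"
proof -
  have "(\<Sum>i\<in>UNIV. L (i+1) / 6) = (\<Sum>i\<in>UNIV. L i / 6)" by (rule sum_UNIV_add_right)
  then have "(\<Sum>i\<in>UNIV. (1/6) *\<^sub>R (L (i+1), L i, T i))
      = ((\<Sum>i\<in>UNIV. L i) / 6, (\<Sum>i\<in>UNIV. L i) / 6, (\<Sum>i\<in>UNIV. T i) / 6)"
    by (simp add: prod_eq_iff fst_sum snd_sum sum_divide_distrib)
  moreover have "angle_fun v2 v3 (\<Sum>i\<in>UNIV. (1/6) *\<^sub>R (L (i+1), L i, T i))
      \<le> (\<Sum>i\<in>UNIV. (1/6) * angle_fun v2 v3 (L (i+1), L i, T i))"
    by (rule convex_on_sum[OF _ _ convex_on_near_reference]) (auto simp: assms)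
  ultimately show ?thesis unfolding corner_sum_def by (simp add: sum_divide_distrib[symmetric])
qed

lemma angle_fun_120_le_obtuse:
  assumes l_pos: "0 < l" and l: "1 \<le> sqrt 3 * l" and t: "2*pi/3 \<le> t" "t \<le> pi"
  shows "angle_fun v2 v3 (l, l, 2*pi/3) \<le> angle_fun v2 v3 (l, l, t)"
proof -
  have "cos t \<le> cos (2*pi/3)"
    by (rule cos_monotone_0_pi_le) (use t in auto)
  then have "third_side l l (2*pi/3) \<le> third_side l l t"
    unfolding third_side_def using l_pos by (intro real_sqrt_le_mono) (simp add: mult_left_mono)
  moreover have "third_side l l (2*pi/3) = sqrt 3 * l"
    unfolding third_side_def using l_pos by (simp add: cos_120 power2_eq_square real_sqrt_mult)
  ultimately have "v2 (third_side l l (2*pi/3)) \<le> v2 (third_side l l t)"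
    using l v2_mono_above_one by simp
  moreover have "0 \<le> v3 t" using v3_nonneg t pi_gt3 by simp
  ultimately show ?thesis unfolding angle_fun_eq using v3_120 by simp
qed

lemma corner_sum_near_reference_lower_bound:
  assumes near: "\<And>i. (L (i+1), L i, T i) \<in> near_reference"
  shows "\<exists>l t. 0 < l \<and> 0 < t \<and> t \<le> 2*pi/3 \<and> 6 * angle_fun v2 v3 (l, l, t) \<le> corner_sum L T"
proof -
  define l where "l = (\<Sum>i\<in>UNIV. L i) / 6"
  define t where "t = (\<Sum>i\<in>UNIV. T i) / 6"
  have bounds: "1 - \<delta> < L i" "2*pi/3 - \<delta> < T i" "T i < 2*pi/3 + \<delta>" for i
    using near[of "i - 1"] near[of i] unfolding near_reference_def by (auto simp: abs_less_iff)
  have "(\<Sum>i\<in>(UNIV::6 set). 1 - \<delta>) < (\<Sum>i\<in>UNIV. L i)"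
    by (rule sum_strict_mono) (auto simp: bounds)
  then have l_gt: "1 - \<delta> < l" unfolding l_def by simp
  have "(\<Sum>i\<in>(UNIV::6 set). 2*pi/3 - \<delta>) < (\<Sum>i\<in>UNIV. T i)"
    "(\<Sum>i\<in>UNIV. T i) < (\<Sum>i\<in>(UNIV::6 set). 2*pi/3 + \<delta>)"
    by (rule sum_strict_mono; auto simp: bounds)+
  then have t_gt: "2*pi/3 - \<delta> < t" and t_lt: "t < 2*pi/3 + \<delta>" unfolding t_def by simp_all
  have energy: "6 * angle_fun v2 v3 (l, l, t) \<le> corner_sum L T"
    unfolding l_def t_def by (rule corner_sum_ge_average_corner) (rule near)
  have l_pos: "0 < l" using l_gt delta_le by linarith
  show ?thesis
  proof (cases "t \<le> 2*pi/3")
    case True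
    moreover have "0 < t" using t_gt delta_le pi_gt3 by linarith
    ultimately show ?thesis using energy l_pos by blast
  next
    case False
    have "1.7 * 0.8 \<le> sqrt 3 * l" using sqrt_3_gt l_gt delta_le by (intro mult_mono) auto
    then have "angle_fun v2 v3 (l, l, 2*pi/3) \<le> angle_fun v2 v3 (l, l, t)"
      using False t_lt delta_le pi_gt3 l_pos by (intro angle_fun_120_le_obtuse) auto
    then show ?thesis using energy l_pos by (intro exI[of _ l] exI[of _ "2*pi/3"]) auto
  qed
qed

context
  fixes L T :: "6 \<Rightarrow> real"
  assumes bond_pos: "\<And>i. 0 < L i"
    and angle_range: "\<And>i. 0 \<le> T i" "\<And>i. T i \<le> pi"
    and third_side_pos: "\<And>i. 0 < third_side (L (i+1)) (L i) (T i)"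
begin

lemma sum_v2_bonds_ge: "v2 (L i0) - 5 \<le> (\<Sum>i\<in>UNIV. v2 (L i))"
  using sum_ge_member_plus[of "-1" "\<lambda>i. v2 (L i)" i0, OF v2_ge_minus_one[OF bond_pos]] by simp

lemma sum_v2_third_sides_ge: "-6 \<le> (\<Sum>i\<in>UNIV. v2 (third_side (L (i+1)) (L i) (T i)))"
  using sum_ge_member_plus[of "-1" "\<lambda>i. v2 (third_side (L (i+1)) (L i) (T i))" 0,
      OF v2_ge_minus_one[OF third_side_pos]] v2_ge_minus_one[OF third_side_pos, of 0]
  by simp

lemma sum_v3_angles_ge: "v3 (T i0) \<le> (\<Sum>i\<in>UNIV. v3 (T i))"
  using sum_ge_member_plus[of 0 "\<lambda>i. v3 (T i)" i0, OF v3_nonneg[OF angle_range]] by simp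

lemma corner_sum_gt_reference_if_compressed:
  assumes "L i0 \<le> 1 - \<delta>"
  shows "-3 + 6 * v2 (sqrt 3) < corner_sum L T"
proof -
  have "v2 (1 - \<delta>) \<le> v2 (L i0)"
    by (rule v2_antimono_below_one) (use bond_pos assms delta_pos in auto)
  then show ?thesis
    using corner_sum_split[of L T] sum_v2_bonds_ge[of i0] sum_v2_third_sides_ge sum_v3_angles_ge[of 0]
      v3_nonneg[OF angle_range, of 0] v2_compressed by linarith
qed

lemma corner_sum_gt_reference_if_bent:
  assumes "\<delta> \<le> \<bar>T i0 - 2*pi/3\<bar>"
  shows "-3 + 6 * v2 (sqrt 3) < corner_sum L T"
  using corner_sum_split[of L T] sum_v2_bonds_ge[of 0] sum_v2_third_sides_ge sum_v3_angles_ge[of i0]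
    v3_bent[OF angle_range assms] v2_ge_minus_one[OF bond_pos, of 0] by linarith

text \<open>Near the reference angle, bonds of length at least 1 - \<delta> force every second-neighbour
  distance up to sqrt 3 (1 - \<delta>)^2 \<ge> 1, where v2 is increasing.\<close>
lemma corner_sum_gt_reference_if_stretched:
  assumes compressed: "\<And>i. 1 - \<delta> < L i" and straight: "\<And>i. \<bar>T i - 2*pi/3\<bar> < \<delta>"
    and stretched: "1 + \<delta> \<le> L i0"
  shows "-3 + 6 * v2 (sqrt 3) < corner_sum L T"
proof -
  define q where "q = sqrt 3 * (1 - \<delta>)\<^sup>2"
  have "0.64 \<le> (1 - \<delta>)\<^sup>2"
    using delta_le mult_mono[of "0.8" "1 - \<delta>" "0.8" "1 - \<delta>"] by (simp add: power2_eq_square)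
  then have "1.7 * 0.64 \<le> q"
    unfolding q_def using sqrt_3_gt by (intro mult_mono) auto
  then have q_ge_1: "1 \<le> q" by simp
  have "v2 q \<le> v2 (third_side (L (i+1)) (L i) (T i))" for i
  proof (rule v2_mono_above_one[OF q_ge_1])
    have "3 * (1 - \<delta>)^4 \<le> (L (i+1))\<^sup>2 + (L i)\<^sup>2 - 2 * L (i+1) * L i * cos (T i)"
      using law_of_cosines_lower_bound[OF delta_pos delta_le, of "L (i+1)" "L i" "T i"]
        compressed[of "i+1"] compressed[of i] straight[of i] angle_range(2)[of i]
      by (simp add: abs_less_iff)
    then have "sqrt (3 * ((1 - \<delta>)\<^sup>2)\<^sup>2) \<le> third_side (L (i+1)) (L i) (T i)"
      unfolding third_side_def power_mult[symmetric] by (simp add: real_sqrt_le_mono)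
    moreover have "sqrt (3 * ((1 - \<delta>)\<^sup>2)\<^sup>2) = q"
      unfolding q_def by (simp only: real_sqrt_mult real_sqrt_abs abs_power2)
    ultimately show "q \<le> third_side (L (i+1)) (L i) (T i)" by simp
  qed
  then have "6 * v2 q \<le> (\<Sum>i\<in>UNIV. v2 (third_side (L (i+1)) (L i) (T i)))"
    using sum_mono[of UNIV "\<lambda>_. v2 q"] by fastforce
  moreover have "v2 (1 + \<delta>) \<le> v2 (L i0)"
    by (rule v2_mono_above_one) (use stretched delta_pos in auto)
  ultimately show ?thesis
    using corner_sum_split[of L T] sum_v2_bonds_ge[of i0] sum_v3_angles_ge[of 0]
      v3_nonneg[OF angle_range, of 0] v2_stretched unfolding q_def by linarith
qed

lemma corner_sum_lower_bound:
  "\<exists>l t. 0 < l \<and> 0 < t \<and> t \<le> 2*pi/3 \<and> 6 * angle_fun v2 v3 (l, l, t) \<le> corner_sum L T"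
proof (cases "-3 + 6 * v2 (sqrt 3) < corner_sum L T")
  case True
  then show ?thesis using reference_energy by (intro exI[of _ 1] exI[of _ "2*pi/3"]) auto
next
  case False
  then have lower: "1 - \<delta> < L i" and straight: "\<bar>T i - 2*pi/3\<bar> < \<delta>" for i
    using corner_sum_gt_reference_if_compressed corner_sum_gt_reference_if_bent by (meson not_le)+
  then have upper: "L i < 1 + \<delta>" for i
    using False corner_sum_gt_reference_if_stretched by (meson not_le)
  have "(L (i+1), L i, T i) \<in> near_reference" for i
    using lower[of i] lower[of "i+1"] upper[of i] upper[of "i+1"] straight[of i]
    unfolding near_reference_def by (simp add: abs_less_iff)
  then show ?thesis by (rule corner_sum_near_reference_lower_bound)
qed

end

lemma E_cell_lower_bound:
  obtains l t where "0 < l" "0 < t" "t \<le> 2*pi/3"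
    "ereal (6 * angle_fun v2 v3 (l, l, t)) \<le> E_cell v2 v3 z"
proof (cases "\<forall>i. z$i \<noteq> z$(i - 1) \<and> z$i \<noteq> z$(i - 2)")
  case True
  define L where "L i = norm (z$i - z$(i - 1))" for i
  define T where "T i = angle_at (z$i) (z$(i + 1)) (z$(i - 1))" for i
  note decomp = E_cell_eq_sum_angle_fun[OF True, folded L_def T_def]
  from corner_sum_lower_bound[of L T] decomp(2-5) obtain l t where
    "0 < l" "0 < t" "t \<le> 2*pi/3" "6 * angle_fun v2 v3 (l, l, t) \<le> corner_sum L T"
    by blast
  moreover have "E_cell v2 v3 z = ereal (corner_sum L T)"
    unfolding corner_sum_def by (rule decomp(1))
  ultimately show ?thesis by (intro that) simp_all
next
  case False
  then have "E_cell v2 v3 z = \<infinity>" unfolding E_cell_def by auto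
  then show ?thesis using that[of 1 "2*pi/3"] by simp
qed

lemma E_cell_ge_minus_nine: "ereal (-9) \<le> E_cell v2 v3 z"
proof -
  obtain l t where lt: "0 < l" "0 < t" "t \<le> 2*pi/3"
    and bound: "ereal (6 * angle_fun v2 v3 (l, l, t)) \<le> E_cell v2 v3 z"
    by (rule E_cell_lower_bound)
  have "cos t < 1" using cos_monotone_0_pi[of 0 t] lt pi_gt3 by simp
  then have "0 < third_side l l t"
    unfolding third_side_def using lt(1) by (simp add: power2_eq_square)
  then have "-3/2 \<le> angle_fun v2 v3 (l, l, t)"
    using v2_ge_minus_one[of l] v2_ge_minus_one[of "third_side l l t"] v3_nonneg[of t] lt pi_gt3
    unfolding angle_fun_eq by linarith
  then have "ereal (-9) \<le> ereal (6 * angle_fun v2 v3 (l, l, t))" by simp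
  then show ?thesis using bound by (rule order_trans)
qed

end

section \<open>Chair deformations\<close>

lemma diff_vector_3: "(vector [a, b, c] :: real^3) - vector [d, e, f] = vector [a - d, b - e, c - f]"
  by (simp add: vec_eq_iff forall_3)

lemma norm_vector_3: "norm (vector [a, b, c] :: real^3) = sqrt (a\<^sup>2 + b\<^sup>2 + c\<^sup>2)"
  by (simp add: norm_eq_sqrt_inner inner_vec_def sum_3 power2_eq_square)

lemma inner_vector_3: "(vector [a, b, c] :: real^3) \<bullet> vector [d, e, f] = a*d + b*e + c*f"
  by (simp add: inner_vec_def sum_3)

definition hex_x :: "6 \<Rightarrow> real" where
  "hex_x i = (if i = 1 then 0 else if i = 2 then 1 else if i = 3 then 3/2 else if i = 4 then 1
              else if i = 5 then 0 else -1/2)"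

definition hex_y :: "6 \<Rightarrow> real" where
  "hex_y i = (if i = 1 then 0 else if i = 2 then 0 else if i = 3 then sqrt 3/2 else if i = 4 then sqrt 3
              else if i = 5 then sqrt 3 else sqrt 3/2)"

definition chair_sign :: "6 \<Rightarrow> real" where
  "chair_sign i = (if i = 1 \<or> i = 3 \<or> i = 5 then 1 else -1)"

lemma cell_vertex_eq:
  "cell_vertex s t i = vector [3/2 * of_int s + hex_x i, sqrt 3/2 * of_int s + sqrt 3 * of_int t + hex_y i]"
  unfolding cell_vertex_def hex_x_def hex_y_def la_def lb_def lc_def
  by (simp add: vec_eq_iff forall_2)

text \<open>The points n a + m b of the lattice are exactly those whose first coordinate is a
  multiple of 3/2; they are lifted to height h, all other points to height -h.\<close>
definition chair :: "real \<Rightarrow> real \<Rightarrow> real^2 \<Rightarrow> real^3" where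
  "chair \<alpha> h p = vector [\<alpha> * p$1, \<alpha> * p$2, if 2 * p$1 / 3 \<in> \<int> then h else -h]"

lemma Ints_add_of_int_div_3_iff: "(of_int s + of_int j / 3 :: real) \<in> \<int> \<longleftrightarrow> 3 dvd j"
proof
  assume "(of_int s + of_int j / 3 :: real) \<in> \<int>"
  then obtain k where "(of_int s + of_int j / 3 :: real) = of_int k" by (metis Ints_cases)
  then have "(of_int j :: real) = of_int (3 * (k - s))" by (simp add: field_simps)
  then have "j = 3 * (k - s)" by (simp only: of_int_eq_iff)
  then show "3 dvd j" by simp
next
  assume "3 dvd j"
  then obtain m where "j = 3 * m" by blast
  then show "(of_int s + of_int j / 3 :: real) \<in> \<int>" by simp
qed

lemma chair_height_test: "(2 * (3/2 * of_int s + hex_x i) / 3 \<in> \<int>) \<longleftrightarrow> chair_sign i = 1"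
proof -
  define j :: int where "j = (if i = 0 then -1 else if i = 2 \<or> i = 4 then 2 else if i = 3 then 3 else 0)"
  have "2 * (3/2 * of_int s + hex_x i) / 3 = of_int s + of_int j / 3"
    using exhaust_6[of i] by (auto simp: j_def hex_x_def)
  moreover have "3 dvd j \<longleftrightarrow> chair_sign i = 1"
    using exhaust_6[of i] by (auto simp: j_def chair_sign_def)
  ultimately show ?thesis by (simp only: Ints_add_of_int_div_3_iff)
qed

lemma chair_cell_vertex: "def_cell (chair \<alpha> h) s t $ i =
   vector [\<alpha> * (3/2 * of_int s + hex_x i), \<alpha> * (sqrt 3/2 * of_int s + sqrt 3 * of_int t + hex_y i),
           chair_sign i * h]"
proof -
  have "chair_sign i = 1 \<or> chair_sign i = -1" by (simp add: chair_sign_def)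
  then show ?thesis
    unfolding def_cell_def chair_def cell_vertex_eq using chair_height_test[of s i] by auto
qed

lemma hex_bond_sq: "(hex_x i - hex_x (i-1))\<^sup>2 + (hex_y i - hex_y (i-1))\<^sup>2 = 1"
  and hex_diagonal_sq: "(hex_x i - hex_x (i-2))\<^sup>2 + (hex_y i - hex_y (i-2))\<^sup>2 = 3"
  and hex_corner_inner:
    "(hex_x (i+1) - hex_x i) * (hex_x (i-1) - hex_x i) + (hex_y (i+1) - hex_y i) * (hex_y (i-1) - hex_y i) = -1/2"
  using exhaust_6[of i] by (auto simp: hex_x_def hex_y_def power2_eq_square algebra_simps)

lemma chair_sign_bond_sq: "(chair_sign i - chair_sign (i-1))\<^sup>2 = 4"
  and chair_sign_diagonal: "chair_sign i - chair_sign (i-2) = 0"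
  and chair_sign_corner: "(chair_sign (i+1) - chair_sign i) * (chair_sign (i-1) - chair_sign i) = 4"
  using exhaust_6[of i] by (auto simp: chair_sign_def power2_eq_square)

lemma chair_cell_diff: "def_cell (chair \<alpha> h) s t $ i - def_cell (chair \<alpha> h) s t $ j =
   vector [\<alpha> * (hex_x i - hex_x j), \<alpha> * (hex_y i - hex_y j), (chair_sign i - chair_sign j) * h]"
  unfolding chair_cell_vertex diff_vector_3 by (simp add: algebra_simps)

lemma chair_bond_length:
  "norm (def_cell (chair \<alpha> h) s t $ i - def_cell (chair \<alpha> h) s t $ (i - 1)) = sqrt (\<alpha>\<^sup>2 + 4 * h\<^sup>2)"
proof -
  have "(\<alpha> * (hex_x i - hex_x (i-1)))\<^sup>2 + (\<alpha> * (hex_y i - hex_y (i-1)))\<^sup>2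
          + ((chair_sign i - chair_sign (i-1)) * h)\<^sup>2
        = \<alpha>\<^sup>2 * ((hex_x i - hex_x (i-1))\<^sup>2 + (hex_y i - hex_y (i-1))\<^sup>2)
          + (chair_sign i - chair_sign (i-1))\<^sup>2 * h\<^sup>2"
    by (simp add: power2_eq_square algebra_simps)
  then show ?thesis unfolding chair_cell_diff norm_vector_3 hex_bond_sq chair_sign_bond_sq by simp
qed

lemma chair_diagonal_length:
  assumes "0 \<le> \<alpha>"
  shows "norm (def_cell (chair \<alpha> h) s t $ i - def_cell (chair \<alpha> h) s t $ (i - 2)) = sqrt 3 * \<alpha>"
proof -
  have "(\<alpha> * (hex_x i - hex_x (i-2)))\<^sup>2 + (\<alpha> * (hex_y i - hex_y (i-2)))\<^sup>2
        = \<alpha>\<^sup>2 * ((hex_x i - hex_x (i-2))\<^sup>2 + (hex_y i - hex_y (i-2))\<^sup>2)"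
    by (simp add: power2_eq_square algebra_simps)
  then show ?thesis
    unfolding chair_cell_diff norm_vector_3 hex_diagonal_sq chair_sign_diagonal
    using assms by (simp add: real_sqrt_mult mult.commute)
qed

lemma chair_corner_inner:
  "(def_cell (chair \<alpha> h) s t $ (i+1) - def_cell (chair \<alpha> h) s t $ i) \<bullet>
     (def_cell (chair \<alpha> h) s t $ (i-1) - def_cell (chair \<alpha> h) s t $ i) = - \<alpha>\<^sup>2 / 2 + 4 * h\<^sup>2"
proof -
  have "\<alpha> * (hex_x (i+1) - hex_x i) * (\<alpha> * (hex_x (i-1) - hex_x i))
          + \<alpha> * (hex_y (i+1) - hex_y i) * (\<alpha> * (hex_y (i-1) - hex_y i))
          + (chair_sign (i+1) - chair_sign i) * h * ((chair_sign (i-1) - chair_sign i) * h)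
      = \<alpha>\<^sup>2 * ((hex_x (i+1) - hex_x i) * (hex_x (i-1) - hex_x i)
                + (hex_y (i+1) - hex_y i) * (hex_y (i-1) - hex_y i))
        + ((chair_sign (i+1) - chair_sign i) * (chair_sign (i-1) - chair_sign i)) * h\<^sup>2"
    by (simp add: power2_eq_square algebra_simps)
  then show ?thesis unfolding chair_cell_diff inner_vector_3 hex_corner_inner chair_sign_corner by simp
qed

text \<open>The parameters solve \<alpha>^2 + 4 h^2 = l^2 (bond length l) and
  -\<alpha>^2/2 + 4 h^2 = l^2 cos \<theta> (corner angle \<theta>); h is real because \<theta> \<le> 2 pi/3.\<close>
lemma exists_deformation_with_uniform_cells:
  assumes l: "0 < l" and \<theta>: "0 < \<theta>" "\<theta> \<le> 2*pi/3"
  shows "\<exists>y. \<forall>s t. E_cell v2 v3 (def_cell y s t) = ereal (6 * angle_fun v2 v3 (l, l, \<theta>))"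
proof -
  define c where "c = cos \<theta>"
  have c_lt: "c < 1" unfolding c_def using cos_monotone_0_pi[of 0 \<theta>] \<theta> pi_gt3 by simp
  have c_ge: "-1/2 \<le> c"
    unfolding c_def using cos_monotone_0_pi_le[of \<theta> "2*pi/3"] \<theta> pi_gt3 by (simp add: cos_120)
  define \<alpha> where "\<alpha> = sqrt (2 * l\<^sup>2 * (1 - c) / 3)"
  define h where "h = sqrt (l\<^sup>2 * (1 + 2 * c) / 3) / 2"
  have \<alpha>_pos: "0 < \<alpha>" unfolding \<alpha>_def using l c_lt by simp
  have \<alpha>_sq: "\<alpha>\<^sup>2 = 2 * l\<^sup>2 * (1 - c) / 3" unfolding \<alpha>_def using c_lt by simp
  have h_sq: "4 * h\<^sup>2 = l\<^sup>2 * (1 + 2 * c) / 3" unfolding h_def using c_ge by (simp add: power_divide)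
  show ?thesis
  proof (intro exI allI)
    fix s t
    define z where "z = def_cell (chair \<alpha> h) s t"
    have bond: "norm (z$i - z$(i - 1)) = l" for i
      unfolding z_def chair_bond_length \<alpha>_sq h_sq using l by (simp add: field_simps)
    have bond_succ: "norm (z$(i+1) - z$i) = l" for i using bond[of "i+1"] by simp
    have bond_pred: "norm (z$(i-1) - z$i) = l" for i using bond[of i] by (simp add: norm_minus_commute)
    have "0 < norm (z$i - z$(i - 2))" for i
      unfolding z_def chair_diagonal_length[OF less_imp_le[OF \<alpha>_pos]] using \<alpha>_pos by simp
    then have nondegenerate: "\<forall>i. z$i \<noteq> z$(i - 1) \<and> z$i \<noteq> z$(i - 2)"
      using bond l by (metis less_irrefl norm_zero right_minus_eq)
    have angle: "angle_at (z$i) (z$(i + 1)) (z$(i - 1)) = \<theta>" for i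
    proof -
      have "(z$(i+1) - z$i) \<bullet> (z$(i-1) - z$i) = l\<^sup>2 * c"
        unfolding z_def chair_corner_inner \<alpha>_sq h_sq by (simp add: field_simps)
      then have "angle_at (z$i) (z$(i + 1)) (z$(i - 1)) = arccos (cos \<theta>)"
        unfolding angle_at_def bond_succ bond_pred c_def using l by (simp add: power2_eq_square)
      also have "\<dots> = \<theta>" using \<theta> pi_gt3 by (intro arccos_cos) auto
      finally show ?thesis .
    qed
    show "E_cell v2 v3 (def_cell (chair \<alpha> h) s t) = ereal (6 * angle_fun v2 v3 (l, l, \<theta>))"
      unfolding z_def[symmetric] E_cell_eq_sum_angle_fun(1)[OF nondegenerate] using bond bond_succ angle
      by simp
  qed
qed

lemma bary_coordinates:
  "bary s t $ 1 = 1/2 + 3/2 * of_int s"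
  "bary s t $ 2 = sqrt 3/2 + sqrt 3/2 * of_int s + sqrt 3 * of_int t"
  unfolding bary_def la_def lb_def by simp_all

lemma finite_cells_in_ball: "finite (cells_in_ball m)"
proof -
  define M where "M = 2 * int m + 2"
  have "cells_in_ball m \<subseteq> {-M..M} \<times> {-M..M}"
  proof
    fix p assume "p \<in> cells_in_ball m"
    then obtain s t where p: "p = (s, t)" and n: "norm (bary s t) \<le> real m"
      unfolding cells_in_ball_def by auto
    have s_bound: "\<bar>1/2 + 3/2 * of_int s\<bar> \<le> real m"
      using component_le_norm_cart[of "bary s t" 1] n bary_coordinates by simp
    have "\<bar>sqrt 3/2 + sqrt 3/2 * of_int s + sqrt 3 * of_int t\<bar> \<le> real m"
      using component_le_norm_cart[of "bary s t" 2] n bary_coordinates by simp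
    moreover have "sqrt 3/2 + sqrt 3/2 * of_int s + sqrt 3 * of_int t
        = sqrt 3 * ((1 + of_int s + 2 * of_int t) / 2)"
      by (simp add: algebra_simps)
    moreover have "\<bar>(1 + of_int s + 2 * of_int t) / 2\<bar> \<le> sqrt 3 * \<bar>(1 + of_int s + 2 * of_int t) / 2\<bar>"
      using mult_right_mono[of 1 "sqrt 3" "\<bar>(1 + of_int s + 2 * of_int t) / 2\<bar>"] by simp
    ultimately have t_bound: "\<bar>(1 + of_int s + 2 * of_int t) / 2\<bar> \<le> (real m :: real)"
      by (simp add: abs_mult)
    have "\<bar>s\<bar> \<le> int m + 1" using s_bound by linarith
    moreover have "\<bar>t\<bar> \<le> 2 * int m + 2"
      using s_bound t_bound by (auto simp: abs_le_iff field_simps)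
    ultimately show "p \<in> {-M..M} \<times> {-M..M}" unfolding p M_def by auto
  qed
  then show ?thesis by (rule finite_subset) auto
qed

lemma card_cells_in_ball_pos:
  assumes "1 \<le> m"
  shows "0 < card (cells_in_ball m)"
proof -
  have "norm (bary 0 0) = 1"
    unfolding bary_def by (simp add: norm_eq_sqrt_inner inner_vec_def sum_2 power2_eq_square)
  then have "(0, 0) \<in> cells_in_ball m" unfolding cells_in_ball_def using assms by simp
  then show ?thesis using finite_cells_in_ball card_gt_0_iff by blast
qed

lemma in_cells_in_some_ball: "\<exists>m\<ge>1. (s, t) \<in> cells_in_ball m"
proof -
  define m where "m = max 1 (nat \<lceil>norm (bary s t)\<rceil>)"
  have "norm (bary s t) \<le> real m" unfolding m_def by linarith
  then show ?thesis unfolding cells_in_ball_def m_def by (intro exI[of _ m]) (auto simp: m_def)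
qed

lemma ereal_average_ge:
  assumes K: "finite K" "0 < card K" and f: "\<And>k. k \<in> K \<Longrightarrow> ereal r \<le> f k"
  shows "ereal r \<le> (\<Sum>k\<in>K. f k) / ereal (real (card K))"
proof -
  have "(\<Sum>k\<in>K. ereal r) \<le> (\<Sum>k\<in>K. f k)" by (rule sum_mono) (rule f)
  moreover have "(\<Sum>k\<in>K. ereal r) = ereal (real (card K)) * ereal r" by simp
  ultimately show ?thesis using K by (subst ereal_le_divide_pos) auto
qed

lemma ereal_average_gt:
  assumes K: "finite K" and k0: "k0 \<in> K"
    and f: "\<And>k. k \<in> K \<Longrightarrow> ereal r \<le> f k" and f0: "ereal r < f k0"
  shows "ereal r < (\<Sum>k\<in>K. f k) / ereal (real (card K))"
proof -
  have card_pos: "0 < card K" using K k0 card_gt_0_iff by blast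
  define q where "q = real (card K - 1) * r"
  have "(\<Sum>k\<in>K - {k0}. ereal r) \<le> (\<Sum>k\<in>K - {k0}. f k)" by (rule sum_mono) (use f in auto)
  moreover have "(\<Sum>k\<in>K - {k0}. ereal r) = ereal q"
    unfolding q_def using K k0 by (simp add: card_Diff_singleton)
  ultimately have "f k0 + ereal q \<le> f k0 + (\<Sum>k\<in>K - {k0}. f k)" by (simp add: add_left_mono)
  moreover have "ereal r + ereal q < f k0 + ereal q"
    using ereal_less_add[of "ereal q" "ereal r" "f k0"] f0 by (simp add: add.commute)
  moreover have "(\<Sum>k\<in>K. f k) = f k0 + (\<Sum>k\<in>K - {k0}. f k)" using K k0 by (rule sum.remove)
  moreover have "r + q = real (card K) * r"
    unfolding q_def using card_pos by (simp add: of_nat_diff algebra_simps)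
  ultimately have "ereal (real (card K)) * ereal r < (\<Sum>k\<in>K. f k)" by simp
  then show ?thesis using card_pos by (subst ereal_less_divide_pos) auto
qed

lemma E_def_ge:
  assumes "\<And>s t. ereal r \<le> E_cell v2 v3 (def_cell y s t)"
  shows "ereal r \<le> E_def v2 v3 y"
proof -
  have "ereal r \<le> (\<Sum>(s, t)\<in>cells_in_ball 1. E_cell v2 v3 (def_cell y s t)) / ereal (real (card (cells_in_ball 1)))"
    using finite_cells_in_ball card_cells_in_ball_pos[of 1] assms
    by (intro ereal_average_ge) (auto split: prod.splits)
  also have "\<dots> \<le> E_def v2 v3 y" unfolding E_def_def by (rule SUP_upper) simp
  finally show ?thesis .
qed

lemma E_def_gt:
  assumes "\<And>s t. ereal r \<le> E_cell v2 v3 (def_cell y s t)" and "ereal r < E_cell v2 v3 (def_cell y s0 t0)"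
  shows "ereal r < E_def v2 v3 y"
proof -
  obtain m where m: "1 \<le> m" "(s0, t0) \<in> cells_in_ball m" using in_cells_in_some_ball by blast
  have "ereal r < (\<Sum>(s, t)\<in>cells_in_ball m. E_cell v2 v3 (def_cell y s t)) / ereal (real (card (cells_in_ball m)))"
    using finite_cells_in_ball m(2) assms by (intro ereal_average_gt) (auto split: prod.splits)
  also have "\<dots> \<le> E_def v2 v3 y" unfolding E_def_def by (rule SUP_upper) (use m in simp)
  finally show ?thesis .
qed

lemma E_def_eq_const:
  assumes "\<And>s t. E_cell v2 v3 (def_cell y s t) = ereal r"
  shows "E_def v2 v3 y = ereal r"
proof -
  have "(\<Sum>(s, t)\<in>cells_in_ball m. E_cell v2 v3 (def_cell y s t)) / ereal (real (card (cells_in_ball m)))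
        = ereal r" if "m \<in> {1..}" for m
    using finite_cells_in_ball card_cells_in_ball_pos[of m] that by (simp add: assms card_gt_0_iff)
  then show ?thesis unfolding E_def_def by simp
qed

definition min_cell_energy :: "(real \<Rightarrow> real) \<Rightarrow> (real \<Rightarrow> real) \<Rightarrow> ereal" where
  "min_cell_energy v2 v3 = (INF z. E_cell v2 v3 z)"

lemma optimal_cell_iff_min: "optimal_cell v2 v3 z \<longleftrightarrow> E_cell v2 v3 z = min_cell_energy v2 v3"
  unfolding optimal_cell_def min_cell_energy_def by (metis INF_greatest INF_lower UNIV_I antisym)

context hex_potentials
begin

lemma min_cell_energy_finite: obtains m where "min_cell_energy v2 v3 = ereal m"
proof -
  have "\<exists>y. \<forall>s t. E_cell v2 v3 (def_cell y s t) = ereal (6 * angle_fun v2 v3 (1, 1, 2*pi/3))"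
    by (rule exists_deformation_with_uniform_cells) simp_all
  then obtain y where "E_cell v2 v3 (def_cell y 0 0) = ereal (6 * angle_fun v2 v3 (1, 1, 2*pi/3))"
    by blast
  moreover have "min_cell_energy v2 v3 \<le> E_cell v2 v3 (def_cell y 0 0)"
    unfolding min_cell_energy_def by (rule INF_lower) simp
  ultimately have "min_cell_energy v2 v3 \<noteq> \<infinity>" by auto
  moreover have "ereal (-9) \<le> min_cell_energy v2 v3"
    unfolding min_cell_energy_def by (rule INF_greatest) (rule E_cell_ge_minus_nine)
  ultimately show ?thesis using that by (cases "min_cell_energy v2 v3") auto
qed

lemma E_def_ge_min: "min_cell_energy v2 v3 \<le> E_def v2 v3 y"
  using E_def_ge min_cell_energy_finite unfolding min_cell_energy_def by (metis INF_lower UNIV_I)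

lemma ground_state_iff_E_def_eq_min: "ground_state v2 v3 y \<longleftrightarrow> E_def v2 v3 y = min_cell_energy v2 v3"
proof
  assume ground: "ground_state v2 v3 y"
  have "E_def v2 v3 y \<le> E_cell v2 v3 z" for z
  proof -
    obtain l t where lt: "0 < l" "0 < t" "t \<le> 2*pi/3"
      and bound: "ereal (6 * angle_fun v2 v3 (l, l, t)) \<le> E_cell v2 v3 z"
      by (rule E_cell_lower_bound)
    obtain y' where "\<And>s t'. E_cell v2 v3 (def_cell y' s t') = ereal (6 * angle_fun v2 v3 (l, l, t))"
      using exists_deformation_with_uniform_cells[OF lt] by blast
    then have "E_def v2 v3 y' = ereal (6 * angle_fun v2 v3 (l, l, t))" by (rule E_def_eq_const)
    then show ?thesis using ground bound unfolding ground_state_def by (metis order_trans)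
  qed
  then have "E_def v2 v3 y \<le> min_cell_energy v2 v3" unfolding min_cell_energy_def by (rule INF_greatest)
  then show "E_def v2 v3 y = min_cell_energy v2 v3" using E_def_ge_min by (rule antisym)
next
  assume "E_def v2 v3 y = min_cell_energy v2 v3"
  then show "ground_state v2 v3 y" unfolding ground_state_def using E_def_ge_min by simp
qed

lemma E_def_eq_min_iff:
  "E_def v2 v3 y = min_cell_energy v2 v3 \<longleftrightarrow> (\<forall>s t. E_cell v2 v3 (def_cell y s t) = min_cell_energy v2 v3)"
proof -
  obtain m where m: "min_cell_energy v2 v3 = ereal m" by (rule min_cell_energy_finite)
  have above: "ereal m \<le> E_cell v2 v3 (def_cell y s t)" for s t
    unfolding m[symmetric] min_cell_energy_def by (rule INF_lower) simp
  show ?thesis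
  proof
    assume E: "E_def v2 v3 y = min_cell_energy v2 v3"
    show "\<forall>s t. E_cell v2 v3 (def_cell y s t) = min_cell_energy v2 v3"
    proof (rule ccontr)
      assume "\<not> (\<forall>s t. E_cell v2 v3 (def_cell y s t) = min_cell_energy v2 v3)"
      then obtain s0 t0 where "ereal m < E_cell v2 v3 (def_cell y s0 t0)"
        using above m by (metis order.not_eq_order_implies_strict)
      then have "ereal m < E_def v2 v3 y" using above by (rule E_def_gt[rotated])
      then show False using E m by simp
    qed
  next
    assume "\<forall>s t. E_cell v2 v3 (def_cell y s t) = min_cell_energy v2 v3"
    then show "E_def v2 v3 y = min_cell_energy v2 v3" unfolding m by (intro E_def_eq_const) simp
  qed
qed

end

theorem mainTheorem1:
  fixes v2 v3 :: "real \<Rightarrow> real" and \<delta> :: real and y :: "real^2 \<Rightarrow> real^3"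
  assumes "standing_assumptions v2 v3 \<delta>"
  shows "ground_state v2 v3 y \<longleftrightarrow> (\<forall>s t. optimal_cell v2 v3 (def_cell y s t))"
proof -
  interpret hex_potentials v2 v3 \<delta> by (rule hex_potentials.intro) (rule assms)
  show ?thesis
    unfolding ground_state_iff_E_def_eq_min E_def_eq_min_iff optimal_cell_iff_min ..
qed

end
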